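(* Let $G$ be a finite, simple, connected graph. If $G$ contains an isometric cycle $C$ of length $n\ge 3$, then $\sigma(G)\ge \lceil n/3\rceil$.
   Context: A cycle $C$ in $G$ is isometric if $d_C(u,v)=d_G(u,v)$ for all vertices $u,v$ of $C$, where $d_C$, $d_G$ are graph distances in $C$ and in $G$. The stretch of $G$ is $\sigma(G)=\min_T\max_{uv\in E(G)} d_T(u,v)$, the minimum over all spanning trees $T$ of $G$. *)

theory Defs
  imports Complex_Main
begin

definition simple_graph :: "'a set \<Rightarrow> 'a set set \<Rightarrow> bool" where
  "simple_graph V E \<longleftrightarrow> finite V \<and> (\<forall>e\<in>E. card e = 2 \<and> e \<subseteq> V)"

definition walk :: "'a set \<Rightarrow> 'a set set \<Rightarrow> 'a list \<Rightarrow> bool" where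
  "walk V E xs \<longleftrightarrow> xs \<noteq> [] \<and> set xs \<subseteq> V \<and>
     (\<forall>i. i + 1 < length xs \<longrightarrow> {xs ! i, xs ! (i + 1)} \<in> E)"

definition connected_graph :: "'a set \<Rightarrow> 'a set set \<Rightarrow> bool" where
  "connected_graph V E \<longleftrightarrow> V \<noteq> {} \<and>
     (\<forall>u\<in>V. \<forall>v\<in>V. \<exists>xs. walk V E xs \<and> hd xs = u \<and> last xs = v)"

definition gdist :: "'a set \<Rightarrow> 'a set set \<Rightarrow> 'a \<Rightarrow> 'a \<Rightarrow> nat" where
  "gdist V E u v = (LEAST k. \<exists>xs. walk V E xs \<and> hd xs = u \<and> last xs = v \<and> length xs = k + 1)"

text \<open>A cycle, given by its cyclic sequence of distinct vertices (length = number of vertices = length of the cycle).\<close>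
definition is_cycle :: "'a set \<Rightarrow> 'a set set \<Rightarrow> 'a list \<Rightarrow> bool" where
  "is_cycle V E c \<longleftrightarrow> length c \<ge> 3 \<and> distinct c \<and> set c \<subseteq> V \<and>
     (\<forall>i < length c. {c ! i, c ! ((i + 1) mod length c)} \<in> E)"

definition cycle_edges :: "'a list \<Rightarrow> 'a set set" where
  "cycle_edges c = {{c ! i, c ! ((i + 1) mod length c)} | i. i < length c}"

definition isometric_cycle :: "'a set \<Rightarrow> 'a set set \<Rightarrow> 'a list \<Rightarrow> bool" where
  "isometric_cycle V E c \<longleftrightarrow> is_cycle V E c \<and>
     (\<forall>u\<in>set c. \<forall>v\<in>set c. gdist (set c) (cycle_edges c) u v = gdist V E u v)"

definition is_tree :: "'a set \<Rightarrow> 'a set set \<Rightarrow> bool" where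
  "is_tree V T \<longleftrightarrow> connected_graph V T \<and> \<not> (\<exists>c. is_cycle V T c)"

definition spanning_tree :: "'a set \<Rightarrow> 'a set set \<Rightarrow> 'a set set \<Rightarrow> bool" where
  "spanning_tree V E T \<longleftrightarrow> T \<subseteq> E \<and> is_tree V T"

definition stretch :: "'a set \<Rightarrow> 'a set set \<Rightarrow> nat" where
  "stretch V E = Min ((\<lambda>T. Max {gdist V T u v | u v. {u, v} \<in> E}) ` {T. spanning_tree V E T})"

end

(*
  Fix a spanning tree T and let K be the largest T-distance between the ends of an edge of G.
  Replace each edge c_i c_(i+1) of the isometric cycle C, of length n, by a shortest T-walk P_i,
  of length at most K. Some vertex m of T lies on one of any h = n div 2 consecutive walks P_i:
  otherwise every vertex has a run of h consecutive walks inside one of its branches, and a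
  smallest such branch is impossible, because two runs of h walks around a cycle of length
  n <= 2h + 1 share a vertex. So m lies on three walks that cut C into arcs of length at most
  n/2. Cycle vertices at cyclic distance d <= n/2 are at distance d in G, hence at least d in T;
  the triangle inequality through m, applied on both sides of each of the three walks, then
  gives 2n <= 6K.
*)

theory Submission
  imports Defs
begin

section \<open>Walks and distances\<close>

lemma walk_Cons_Cons: "walk V F (x # y # xs) \<longleftrightarrow> x \<in> V \<and> {x, y} \<in> F \<and> walk V F (y # xs)"
  by (auto simp: walk_def nth_Cons split: nat.splits)

lemma walk_singleton [simp]: "walk V F [x] \<longleftrightarrow> x \<in> V"
  by (auto simp: walk_def)

lemma walk_not_Nil: "walk V F xs \<Longrightarrow> xs \<noteq> []"
  by (simp add: walk_def)

lemma walk_set: "walk V F xs \<Longrightarrow> set xs \<subseteq> V"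
  by (simp add: walk_def)

lemma walk_edge: "walk V F xs \<Longrightarrow> i + 1 < length xs \<Longrightarrow> {xs ! i, xs ! (i + 1)} \<in> F"
  by (simp add: walk_def)

lemma walk_mono: "F \<subseteq> F' \<Longrightarrow> walk V F xs \<Longrightarrow> walk V F' xs"
  by (auto simp: walk_def)

lemma walk_append:
  "walk V F xs \<Longrightarrow> walk V F ys \<Longrightarrow> last xs = hd ys \<Longrightarrow> walk V F (xs @ tl ys)"
proof (induction xs rule: induct_list012)
  case 1
  then show ?case by (simp add: walk_def)
next
  case (2 x)
  then show ?case by (cases ys) auto
next
  case (3 x y zs)
  then show ?case by (auto simp: walk_Cons_Cons)
qed

lemma walk_rev: "walk V F xs \<Longrightarrow> walk V F (rev xs)"
proof (induction xs rule: induct_list012)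
  case 1
  then show ?case by (simp add: walk_def)
next
  case (2 x)
  then show ?case by simp
next
  case (3 x y zs)
  have "walk V F (rev (y # zs))"
    using 3 by (auto simp: walk_Cons_Cons)
  moreover have "walk V F [y, x]"
    using 3 by (auto simp: walk_Cons_Cons insert_commute dest: walk_set)
  ultimately have "walk V F (rev (y # zs) @ tl [y, x])"
    by (rule walk_append) simp
  then show ?case by simp
qed

lemma walk_take: "walk V F xs \<Longrightarrow> 0 < j \<Longrightarrow> walk V F (take j xs)"
  by (auto simp: walk_def dest: in_set_takeD)

lemma walk_drop: "walk V F xs \<Longrightarrow> j < length xs \<Longrightarrow> walk V F (drop j xs)"
  by (auto simp: walk_def dest: in_set_dropD)

lemma distinct_walk_exists:
  "walk V F xs \<Longrightarrow> \<exists>ys. walk V F ys \<and> distinct ys \<and> hd ys = hd xs \<and> last ys = last xs"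
proof (induction "length xs" arbitrary: xs rule: less_induct)
  case less
  show ?case
  proof (cases "distinct xs")
    case True
    then show ?thesis using less.prems by blast
  next
    case False
    then obtain as y bs cs where xs: "xs = as @ [y] @ bs @ [y] @ cs"
      using not_distinct_decomp by blast
    have "walk V F (as @ [y])"
      using walk_take[OF less.prems, of "length as + 1"] xs by simp
    moreover have "walk V F (y # cs)"
      using walk_drop[OF less.prems, of "length as + 1 + length bs"] xs by simp
    ultimately have short: "walk V F ((as @ [y]) @ tl (y # cs))"
      by (rule walk_append) simp
    have "length ((as @ [y]) @ tl (y # cs)) < length xs"
      using xs by simp
    from less.hyps[OF this short] show ?thesis
      using xs by (cases as; cases cs) auto
  qed
qed

definition reachable :: "'a set \<Rightarrow> 'a set set \<Rightarrow> 'a \<Rightarrow> 'a \<Rightarrow> bool" where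
  "reachable V F u v \<longleftrightarrow> (\<exists>w. walk V F w \<and> hd w = u \<and> last w = v)"

lemma reachable_refl: "u \<in> V \<Longrightarrow> reachable V F u u"
  unfolding reachable_def by (rule exI[of _ "[u]"]) simp

lemma reachable_sym: "reachable V F u v \<Longrightarrow> reachable V F v u"
  unfolding reachable_def by (metis walk_rev walk_not_Nil hd_rev last_rev)

lemma walk_append_hd_last:
  assumes "walk V F xs" "walk V F ys" "last xs = hd ys"
  shows "hd (xs @ tl ys) = hd xs" "last (xs @ tl ys) = last ys"
  using assms walk_not_Nil by (cases xs; cases ys; auto)+

lemma reachable_trans: "reachable V F u v \<Longrightarrow> reachable V F v x \<Longrightarrow> reachable V F u x"
  unfolding reachable_def by (metis walk_append walk_append_hd_last)

lemma reachable_edge: "{u, v} \<in> F \<Longrightarrow> u \<in> V \<Longrightarrow> v \<in> V \<Longrightarrow> reachable V F u v"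
  unfolding reachable_def by (rule exI[of _ "[u, v]"]) (simp add: walk_Cons_Cons)

lemma reachable_in_V: "reachable V F u v \<Longrightarrow> u \<in> V \<and> v \<in> V"
  unfolding reachable_def by (metis hd_in_set last_in_set subsetD walk_not_Nil walk_set)

lemma reachable_walk_mem: "walk V F w \<Longrightarrow> u \<in> set w \<Longrightarrow> reachable V F (hd w) u"
proof -
  assume w: "walk V F w" and u: "u \<in> set w"
  obtain j where j: "j < length w" "w ! j = u"
    using u by (auto simp: in_set_conv_nth)
  have "hd (take (j + 1) w) = hd w" "last (take (j + 1) w) = u"
    using j by (cases w, auto simp: take_Suc_conv_app_nth)
  then show ?thesis
    using walk_take[OF w, of "j + 1"] unfolding reachable_def by auto
qed

lemma walk_ends_reachable:
  assumes "\<And>a b. {a, b} \<in> F \<Longrightarrow> a \<in> V \<Longrightarrow> b \<in> V \<Longrightarrow> reachable V F' a b"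
  shows "walk V F w \<Longrightarrow> reachable V F' (hd w) (last w)"
proof (induction w rule: induct_list012)
  case 1
  then show ?case by (simp add: walk_def)
next
  case (2 x)
  then show ?case by (simp add: reachable_refl)
next
  case (3 x y zs)
  then have "reachable V F' x y" "reachable V F' y (last (y # zs))"
    using assms by (auto simp: walk_Cons_Cons dest: walk_set)
  then show ?case using reachable_trans by fastforce
qed

lemma connected_graph_reachable:
  "connected_graph V F \<Longrightarrow> u \<in> V \<Longrightarrow> v \<in> V \<Longrightarrow> reachable V F u v"
  unfolding connected_graph_def reachable_def by blast

lemma gdist_le_walk: "walk V F w \<Longrightarrow> gdist V F (hd w) (last w) + 1 \<le> length w"
proof -
  assume w: "walk V F w"
  then have "\<exists>xs. walk V F xs \<and> hd xs = hd w \<and> last xs = last w \<and> length xs = (length w - 1) + 1"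
    using walk_not_Nil by fastforce
  then have "gdist V F (hd w) (last w) \<le> length w - 1"
    unfolding gdist_def by (rule Least_le)
  then show ?thesis using walk_not_Nil[OF w] by (cases w) auto
qed

lemma shortest_walk_exists:
  assumes "reachable V F u v"
  shows "\<exists>w. walk V F w \<and> hd w = u \<and> last w = v \<and> length w = gdist V F u v + 1"
proof -
  obtain w where w: "walk V F w" "hd w = u" "last w = v"
    using assms unfolding reachable_def by blast
  moreover have "length w = (length w - 1) + 1"
    using walk_not_Nil[OF w(1)] by (cases w) auto
  ultimately have "\<exists>k xs. walk V F xs \<and> hd xs = u \<and> last xs = v \<and> length xs = k + 1"
    by blast
  then show ?thesis unfolding gdist_def by (rule LeastI_ex)
qed

lemma gdist_commute: "reachable V F u v \<Longrightarrow> gdist V F u v = gdist V F v u"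
proof -
  have le: "gdist V F v u \<le> gdist V F u v" if r: "reachable V F u v" for u v
  proof -
    obtain w where w: "walk V F w" "hd w = u" "last w = v" "length w = gdist V F u v + 1"
      using shortest_walk_exists[OF r] by blast
    show ?thesis
      using gdist_le_walk[OF walk_rev[OF w(1)]] w walk_not_Nil[OF w(1)]
      by (simp add: hd_rev last_rev)
  qed
  assume "reachable V F u v"
  then show ?thesis using le[of u v] le[of v u] reachable_sym by fastforce
qed

lemma gdist_triangle:
  assumes "reachable V F u m" "reachable V F m v"
  shows "gdist V F u v \<le> gdist V F u m + gdist V F m v"
proof -
  obtain w1 where w1: "walk V F w1" "hd w1 = u" "last w1 = m" "length w1 = gdist V F u m + 1"
    using shortest_walk_exists[OF assms(1)] by blast
  obtain w2 where w2: "walk V F w2" "hd w2 = m" "last w2 = v" "length w2 = gdist V F m v + 1"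
    using shortest_walk_exists[OF assms(2)] by blast
  have "gdist V F u v + 1 \<le> length (w1 @ tl w2)"
    using gdist_le_walk[OF walk_append[OF w1(1) w2(1)]] walk_append_hd_last[OF w1(1) w2(1)] w1 w2
    by simp
  then show ?thesis using w1 w2 by simp
qed

lemma gdist_via_mem:
  assumes w: "walk V F w" and m: "m \<in> set w"
  shows "gdist V F (hd w) m + gdist V F m (last w) + 1 \<le> length w"
proof -
  obtain j where j: "j < length w" "w ! j = m"
    using m by (auto simp: in_set_conv_nth)
  have "hd (take (j + 1) w) = hd w" "last (take (j + 1) w) = m"
    using j by (cases w, auto simp: take_Suc_conv_app_nth)
  then have "gdist V F (hd w) m + 1 \<le> j + 1"
    using gdist_le_walk[OF walk_take[OF w, of "j + 1"]] j by simp
  moreover have "hd (drop j w) = m" "last (drop j w) = last w"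
    using j by (simp_all add: hd_drop_conv_nth)
  then have "gdist V F m (last w) + 1 \<le> length w - j"
    using gdist_le_walk[OF walk_drop[OF w j(1)]] by simp
  ultimately show ?thesis using j by linarith
qed

lemma gdist_antimono: "F \<subseteq> F' \<Longrightarrow> reachable V F u v \<Longrightarrow> gdist V F' u v \<le> gdist V F u v"
  by (metis gdist_le_walk shortest_walk_exists walk_mono add_le_cancel_right)

section \<open>Cycles\<close>

definition cycle_arc :: "'a list \<Rightarrow> nat \<Rightarrow> nat \<Rightarrow> 'a list" where
  "cycle_arc c i d = map (\<lambda>t. c ! ((i + t) mod length c)) [0..<Suc d]"

lemma hd_cycle_arc: "hd (cycle_arc c i d) = c ! (i mod length c)"
  by (simp add: cycle_arc_def hd_map del: upt_Suc)

lemma last_cycle_arc: "last (cycle_arc c i d) = c ! ((i + d) mod length c)"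
  by (simp add: cycle_arc_def last_map del: upt_Suc)

lemma walk_cycle_arc:
  assumes "set c \<subseteq> W" "c \<noteq> []"
    and "\<And>t. t < d \<Longrightarrow> {c ! ((i + t) mod length c), c ! ((i + Suc t) mod length c)} \<in> F"
  shows "walk W F (cycle_arc c i d)"
  unfolding walk_def
proof (intro conjI allI impI)
  show "cycle_arc c i d \<noteq> []" "set (cycle_arc c i d) \<subseteq> W"
    using assms(1,2) by (auto simp: cycle_arc_def simp del: upt_Suc)
  fix j
  assume "j + 1 < length (cycle_arc c i d)"
  then show "{cycle_arc c i d ! j, cycle_arc c i d ! (j + 1)} \<in> F"
    using assms(3)[of j] by (simp add: cycle_arc_def nth_map del: upt_Suc)
qed

lemma cycle_arc_walk_cycle_edges:
  assumes "is_cycle V E c"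
  shows "walk (set c) (cycle_edges c) (cycle_arc c i d)"
proof (rule walk_cycle_arc)
  show "c \<noteq> []" using assms by (auto simp: is_cycle_def)
  fix t
  have "(i + t) mod length c < length c" using \<open>c \<noteq> []\<close> by simp
  then have "{c ! ((i + t) mod length c), c ! (((i + t) mod length c + 1) mod length c)} \<in> cycle_edges c"
    unfolding cycle_edges_def by blast
  then show "{c ! ((i + t) mod length c), c ! ((i + Suc t) mod length c)} \<in> cycle_edges c"
    by (simp add: mod_Suc_eq)
qed simp

lemma cycle_edges_neighbour:
  assumes "distinct c" "p < length c" "{c ! p, x} \<in> cycle_edges c"
  shows "\<exists>q<length c. x = c ! q \<and> (q = (p + 1) mod length c \<or> p = (q + 1) mod length c)"
proof -
  obtain i where i: "i < length c" "{c ! p, x} = {c ! i, c ! ((i + 1) mod length c)}"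
    using assms(3) unfolding cycle_edges_def by blast
  have il: "(i + 1) mod length c < length c"
    by (rule mod_less_divisor) (use i(1) in auto)
  from i(2) consider "c ! p = c ! i" "x = c ! ((i + 1) mod length c)"
    | "c ! p = c ! ((i + 1) mod length c)" "x = c ! i"
    by (auto simp: doubleton_eq_iff)
  then show ?thesis
  proof cases
    case 1
    then have "p = i" using assms i nth_eq_iff_index_eq by metis
    then show ?thesis using 1 il by blast
  next
    case 2
    then have "p = (i + 1) mod length c" using assms i il nth_eq_iff_index_eq by metis
    then show ?thesis using 2 i by blast
  qed
qed

lemma cycle_walk_displacement:
  assumes "distinct c"
  shows "walk (set c) (cycle_edges c) w \<Longrightarrow> i < length c \<Longrightarrow> hd w = c ! i \<Longrightarrow>
    \<exists>j<length c. last w = c ! j \<and>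
      (\<exists>s::int. \<bar>s\<bar> \<le> int (length w) - 1 \<and> (int i + s) mod int (length c) = int j)"
proof (induction w arbitrary: i rule: induct_list012)
  case 1
  then show ?case by (simp add: walk_def)
next
  case (2 x)
  then show ?case by (intro exI[of _ i]) (auto intro!: exI[of _ 0])
next
  case (3 x y zs)
  let ?n = "int (length c)"
  obtain q where q: "q < length c" "y = c ! q" "q = (i + 1) mod length c \<or> i = (q + 1) mod length c"
    using cycle_edges_neighbour[OF assms \<open>i < length c\<close>] 3 by (auto simp: walk_Cons_Cons)
  have "walk (set c) (cycle_edges c) (y # zs)" using 3 by (simp add: walk_Cons_Cons)
  from "3.IH"(2)[OF this q(1)] q(2) obtain j s where js: "j < length c" "last (y # zs) = c ! j"
    "\<bar>s\<bar> \<le> int (length (y # zs)) - 1" "(int q + s) mod ?n = int j"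
    by auto
  from q(3) obtain s' where "\<bar>s'\<bar> \<le> \<bar>s\<bar> + 1" "(int i + s') mod ?n = int j"
  proof
    assume "q = (i + 1) mod length c"
    then have "int q = (int i + 1) mod ?n" by (simp add: zmod_int add.commute)
    then have "(int i + (s + 1)) mod ?n = (int q + s) mod ?n"
      using mod_add_left_eq[of "int i + 1" ?n s] by (simp add: ac_simps)
    then show thesis using that[of "s + 1"] js(4) by simp
  next
    assume "i = (q + 1) mod length c"
    then have "int i = (int q + 1) mod ?n" by (simp add: zmod_int add.commute)
    then have "(int i + (s - 1)) mod ?n = (int q + s) mod ?n"
      using mod_add_left_eq[of "int q + 1" ?n "s - 1"] by (simp add: ac_simps)
    then show thesis using that[of "s - 1"] js(4) by simp
  qed
  then show ?case using js by (intro exI[of _ j]) (auto intro!: exI[of _ s'])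
qed

lemma displacement_ge:
  fixes s :: int and n d i :: nat
  assumes "(int i + s) mod int n = int ((i + d) mod n)" "2 * d \<le> n"
  shows "int d \<le> \<bar>s\<bar>"
proof -
  have "(int i + s) mod int n = (int i + int d) mod int n"
    using assms(1) by (simp add: zmod_int)
  then have "int n dvd (s - int d)" by (simp add: mod_eq_dvd_iff)
  then obtain t where t: "s - int d = int n * t" by (auto simp: dvd_def)
  consider "t = 0" | "t \<ge> 1" | "t \<le> -1" by linarith
  then show ?thesis
  proof cases
    case 2
    then have "int n * t \<ge> int n" by (simp add: mult_le_cancel_left1)
    then show ?thesis using t by linarith
  next
    case 3
    then have "int n * t \<le> - int n" using mult_left_mono[of t "-1" "int n"] by simp
    then show ?thesis using t assms(2) by linarith
  qed (use t in simp)
qed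

lemma gdist_cycle_ge:
  assumes "is_cycle V E c" "i < length c" "2 * d \<le> length c"
  shows "d \<le> gdist (set c) (cycle_edges c) (c ! i) (c ! ((i + d) mod length c))"
proof -
  let ?n = "length c" and ?F = "cycle_edges c"
  have "reachable (set c) ?F (c ! i) (c ! ((i + d) mod ?n))"
    using cycle_arc_walk_cycle_edges[OF assms(1), of i d] hd_cycle_arc[of c i d]
      last_cycle_arc[of c i d] assms(2)
    unfolding reachable_def by (metis mod_less)
  then obtain w where w: "walk (set c) ?F w" "hd w = c ! i" "last w = c ! ((i + d) mod ?n)"
      "length w = gdist (set c) ?F (c ! i) (c ! ((i + d) mod ?n)) + 1"
    using shortest_walk_exists by metis
  have dc: "distinct c" using assms(1) by (simp add: is_cycle_def)
  obtain j s where js: "j < ?n" "last w = c ! j" "\<bar>s\<bar> \<le> int (length w) - 1"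
      "(int i + s) mod int ?n = int j"
    using cycle_walk_displacement[OF dc w(1) assms(2) w(2)] by blast
  have "(i + d) mod ?n < ?n" using assms(2) by (cases c) auto
  with nth_eq_iff_index_eq[OF dc js(1)] have "j = (i + d) mod ?n"
    using js(2) w(3) by metis
  then have "int d \<le> \<bar>s\<bar>" using displacement_ge[OF _ assms(3)] js(4) by simp
  then show ?thesis using js(3) w(4) by linarith
qed

lemma isometric_cycle_gdist_ge:
  assumes "isometric_cycle V E c" "2 * d \<le> length c"
  shows "d \<le> gdist V E (c ! (x mod length c)) (c ! ((x + d) mod length c))"
proof -
  have cyc: "is_cycle V E c" and n: "length c > 0"
    using assms(1) by (auto simp: isometric_cycle_def is_cycle_def)
  have "d \<le> gdist (set c) (cycle_edges c) (c ! (x mod length c)) (c ! ((x mod length c + d) mod length c))"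
    using gdist_cycle_ge[OF cyc _ assms(2)] n by simp
  also have "(x mod length c + d) mod length c = (x + d) mod length c"
    by (simp add: mod_add_left_eq)
  finally show ?thesis
    using assms(1) n unfolding isometric_cycle_def by simp
qed

lemma distinct_walk_closes_cycle:
  assumes "walk V F ys" "distinct ys" "length ys \<ge> 3" "{last ys, hd ys} \<in> F"
  shows "is_cycle V F ys"
  unfolding is_cycle_def
proof (intro conjI allI impI)
  show "set ys \<subseteq> V" using walk_set[OF assms(1)] .
  fix i
  assume i: "i < length ys"
  show "{ys ! i, ys ! ((i + 1) mod length ys)} \<in> F"
  proof (cases "i + 1 < length ys")
    case True
    then show ?thesis using walk_edge[OF assms(1)] by simp
  next
    case False
    then have "i + 1 = length ys" using i by simp
    then have "i = length ys - 1" "(i + 1) mod length ys = 0" by auto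
    moreover have "ys \<noteq> []" using assms(3) by auto
    ultimately show ?thesis using assms(4) by (simp add: last_conv_nth hd_conv_nth)
  qed
qed (use assms in auto)

section \<open>Trees\<close>

lemma simple_graph_finite_edges: "simple_graph V E \<Longrightarrow> finite E"
  unfolding simple_graph_def by (meson Pow_iff finite_Pow_iff finite_subset subsetI)

lemma simple_graph_subset: "simple_graph V E \<Longrightarrow> F \<subseteq> E \<Longrightarrow> simple_graph V F"
  unfolding simple_graph_def by blast

lemma walk_Diff_edge:
  assumes "walk V F w" "x \<notin> set w"
  shows "walk V (F - {{x, y}}) w"
  unfolding walk_def
proof (intro conjI allI impI)
  fix i
  assume i: "i + 1 < length w"
  then have "w ! i \<noteq> x" "w ! (i + 1) \<noteq> x" using assms(2) nth_mem by fastforce+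
  then show "{w ! i, w ! (i + 1)} \<in> F - {{x, y}}"
    using walk_edge[OF assms(1) i] by (auto simp: doubleton_eq_iff)
qed (use assms in \<open>auto simp: walk_def\<close>)

lemma cycle_arc_avoids_first_edge:
  assumes cyc: "is_cycle V T c"
  shows "walk V (T - {{c ! 0, c ! 1}}) (cycle_arc c 1 (length c - 1))"
proof (rule walk_cycle_arc)
  let ?n = "length c"
  have n3: "?n \<ge> 3" and dc: "distinct c" and edges: "\<And>i. i < ?n \<Longrightarrow> {c ! i, c ! ((i + 1) mod ?n)} \<in> T"
    using cyc by (auto simp: is_cycle_def)
  show "set c \<subseteq> V" "c \<noteq> []" using cyc by (auto simp: is_cycle_def)
  fix t
  assume t: "t < ?n - 1"
  then have l: "1 + t < ?n" "0 < ?n" "1 < ?n" using n3 by auto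
  have "{c ! (1 + t), c ! ((1 + t + 1) mod ?n)} \<noteq> {c ! 0, c ! 1}"
  proof
    assume eq: "{c ! (1 + t), c ! ((1 + t + 1) mod ?n)} = {c ! 0, c ! 1}"
    then have "c ! (1 + t) = c ! 1"
      using nth_eq_iff_index_eq[OF dc l(1,2)] by (auto simp: doubleton_eq_iff)
    then have "t = 0" using nth_eq_iff_index_eq[OF dc l(1,3)] by simp
    with eq n3 have "c ! 2 = c ! 0" by (auto simp: doubleton_eq_iff numeral_2_eq_2)
    then show False using nth_eq_iff_index_eq[OF dc _ l(2), of 2] n3 by simp
  qed
  then show "{c ! ((1 + t) mod ?n), c ! ((1 + Suc t) mod ?n)} \<in> T - {{c ! 0, c ! 1}}"
    using edges[of "1 + t"] t by simp
qed

lemma connected_graph_Diff_cycle_edge: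
  assumes conn: "connected_graph V T" and cyc: "is_cycle V T c"
  shows "connected_graph V (T - {{c ! 0, c ! 1}})"
proof -
  let ?T' = "T - {{c ! 0, c ! 1}}"
  have n3: "length c \<ge> 3" using cyc by (simp add: is_cycle_def)
  have "Suc (length c - Suc 0) = length c" using n3 by simp
  then have "hd (cycle_arc c 1 (length c - 1)) = c ! 1" "last (cycle_arc c 1 (length c - 1)) = c ! 0"
    using n3 by (simp_all add: hd_cycle_arc last_cycle_arc)
  then have "reachable V ?T' (c ! 1) (c ! 0)"
    using cycle_arc_avoids_first_edge[OF cyc] unfolding reachable_def by blast
  then have edges_reachable: "reachable V ?T' a b" if "{a, b} \<in> T" "a \<in> V" "b \<in> V" for a b
    using that reachable_edge[of a b ?T' V] reachable_sym by (cases "{a, b} = {c ! 0, c ! 1}")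
      (auto simp: doubleton_eq_iff)
  show ?thesis
    unfolding connected_graph_def
  proof (intro conjI ballI)
    show "V \<noteq> {}" using conn by (simp add: connected_graph_def)
    fix u v
    assume "u \<in> V" "v \<in> V"
    then obtain w where "walk V T w" "hd w = u" "last w = v"
      using conn unfolding connected_graph_def by blast
    then show "\<exists>xs. walk V ?T' xs \<and> hd xs = u \<and> last xs = v"
      using walk_ends_reachable[OF edges_reachable] unfolding reachable_def by blast
  qed
qed

text \<open>A minimal connected spanning subgraph has no cycle, since deleting a cycle edge keeps it
  connected.\<close>

lemma spanning_tree_exists:
  assumes "simple_graph V E" "connected_graph V E"
  shows "\<exists>T. spanning_tree V E T"
proof -
  define conn_sub where "conn_sub T \<longleftrightarrow> T \<subseteq> E \<and> connected_graph V T" for T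
  obtain T where T: "conn_sub T" and min: "\<And>T'. conn_sub T' \<Longrightarrow> card T \<le> card T'"
    using ex_has_least_nat[of conn_sub E card] assms(2) unfolding conn_sub_def by blast
  have "finite T"
    using T simple_graph_finite_edges[OF assms(1)] finite_subset unfolding conn_sub_def by blast
  have "\<not> is_cycle V T c" for c
  proof
    assume cyc: "is_cycle V T c"
    then have "{c ! 0, c ! 1} \<in> T" by (auto simp: is_cycle_def dest: spec[of _ 0])
    then have "card (T - {{c ! 0, c ! 1}}) < card T"
      by (rule card_Diff1_less[OF \<open>finite T\<close>])
    moreover have "conn_sub (T - {{c ! 0, c ! 1}})"
      using T connected_graph_Diff_cycle_edge[OF _ cyc] unfolding conn_sub_def by blast
    ultimately show False using min by fastforce
  qed
  then show ?thesis using T unfolding conn_sub_def spanning_tree_def is_tree_def by blast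
qed

lemma acyclic_edge_is_bridge:
  assumes acyclic: "\<not> (\<exists>c. is_cycle V T c)" and e: "{x, y} \<in> T" "x \<noteq> y"
  shows "\<not> reachable V (T - {{x, y}}) y x"
proof
  assume "reachable V (T - {{x, y}}) y x"
  then obtain ys where ys: "walk V (T - {{x, y}}) ys" "distinct ys" "hd ys = y" "last ys = x"
    unfolding reachable_def using distinct_walk_exists by metis
  have "length ys \<ge> 3"
  proof (rule ccontr)
    assume "\<not> length ys \<ge> 3"
    with walk_not_Nil[OF ys(1)] consider a where "ys = [a]" | a b where "ys = [a, b]"
      by (cases ys; cases "tl ys"; cases "tl (tl ys)") auto
    then show False
      using ys e walk_edge[OF ys(1), of 0] by cases (auto simp: insert_commute)
  qed
  then have "is_cycle V T ys"
    using distinct_walk_closes_cycle[OF walk_mono[OF _ ys(1)] ys(2)] e ys(3,4)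
    by (simp add: insert_commute)
  then show False using acyclic by blast
qed

locale tree =
  fixes V :: "'a set" and T :: "'a set set"
  assumes graph: "simple_graph V T" and tree: "is_tree V T"
begin

lemma finite_V: "finite V"
  using graph by (simp add: simple_graph_def)

lemma edge_ends: "{x, y} \<in> T \<Longrightarrow> x \<noteq> y \<and> x \<in> V \<and> y \<in> V"
proof -
  assume "{x, y} \<in> T"
  then have "card {x, y} = 2" "{x, y} \<subseteq> V" using graph by (auto simp: simple_graph_def)
  then show ?thesis by (cases "x = y") auto
qed

lemma connected: "connected_graph V T"
  using tree by (simp add: is_tree_def)

definition branch :: "'a \<Rightarrow> 'a \<Rightarrow> 'a set" where
  "branch x y = {v. reachable V (T - {{x, y}}) y v}"

lemma branch_subset: "branch x y \<subseteq> V"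
  unfolding branch_def using reachable_in_V by fast

lemma acyclic: "\<not> (\<exists>c. is_cycle V T c)"
  using tree by (simp add: is_tree_def)

lemma start_notin_branch: "{x, y} \<in> T \<Longrightarrow> x \<notin> branch x y"
  using acyclic_edge_is_bridge[OF acyclic] edge_ends by (simp add: branch_def)

lemma end_in_branch: "{x, y} \<in> T \<Longrightarrow> y \<in> branch x y"
  using edge_ends[of x y] reachable_refl[of y V] by (simp add: branch_def)

lemma walk_in_branch:
  assumes "walk V (T - {{x, y}}) w" "hd w \<in> branch x y"
  shows "set w \<subseteq> branch x y"
proof
  fix v
  assume "v \<in> set w"
  then show "v \<in> branch x y"
    using reachable_trans[OF _ reachable_walk_mem[OF assms(1)]] assms(2) by (simp add: branch_def)
qed

lemma branches_disjoint:
  assumes "{x, y} \<in> T"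
  shows "branch x y \<inter> branch y x = {}"
proof (intro equalityI subsetI)
  fix v
  assume "v \<in> branch x y \<inter> branch y x"
  then have "reachable V (T - {{x, y}}) y v" "reachable V (T - {{x, y}}) x v"
    by (auto simp: branch_def insert_commute)
  then have "reachable V (T - {{x, y}}) y x" using reachable_trans reachable_sym by metis
  then have "x \<in> branch x y" by (simp add: branch_def)
  then show "v \<in> {}" using start_notin_branch[OF assms] by blast
qed simp

lemma branch_psubset:
  assumes xy: "{x, y} \<in> T" and yz: "{y, z} \<in> T" and "z \<noteq> x"
  shows "branch y z \<subset> branch x y"
proof -
  have "{y, z} \<noteq> {x, y}" using \<open>z \<noteq> x\<close> edge_ends[OF yz] by (auto simp: doubleton_eq_iff)
  then have "reachable V (T - {{x, y}}) y z"
    using yz edge_ends[OF yz] by (intro reachable_edge) auto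
  then have z: "z \<in> branch x y" by (simp add: branch_def)
  have "v \<in> branch x y" if v: "v \<in> branch y z" for v
  proof -
    obtain w where w: "walk V (T - {{y, z}}) w" "hd w = z" "last w = v"
      using v unfolding branch_def reachable_def by blast
    have "y \<notin> set w"
    proof
      assume "y \<in> set w"
      then have "y \<in> branch y z" using reachable_walk_mem[OF w(1)] w(2) by (simp add: branch_def)
      then show False using start_notin_branch[OF yz] by blast
    qed
    moreover have "walk V T w" using walk_mono[OF _ w(1)] by blast
    ultimately have "walk V (T - {{x, y}}) w"
      using walk_Diff_edge[of V T w y x] by (simp add: insert_commute)
    then have "set w \<subseteq> branch x y"
      using walk_in_branch z w(2) by blast
    then show ?thesis using w(3) walk_not_Nil[OF w(1)] last_in_set by blast
  qed
  then show ?thesis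
    using end_in_branch[OF xy] start_notin_branch[OF yz] by blast
qed

lemma exists_branch_containing:
  assumes "m \<in> V" "v \<in> V" "v \<noteq> m"
  shows "\<exists>z. {m, z} \<in> T \<and> v \<in> branch m z"
proof -
  obtain w0 where w0: "walk V T w0" "hd w0 = m" "last w0 = v"
    using connected_graph_reachable[OF connected assms(1,2)] unfolding reachable_def by blast
  obtain w where w: "walk V T w" "distinct w" "hd w = m" "last w = v"
    using distinct_walk_exists[OF w0(1)] w0(2,3) by auto
  obtain u w' where w': "w = m # u # w'"
    using w(3,4) walk_not_Nil[OF w(1)] assms(3) by (cases w rule: remdups_adj.cases) auto
  have "{m, u} \<in> T" "walk V T (u # w')" "m \<notin> set (u # w')" "last (u # w') = v"
    using w w' by (auto simp: walk_Cons_Cons)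
  then have "reachable V (T - {{m, u}}) u v"
    unfolding reachable_def using walk_Diff_edge by fastforce
  then show ?thesis using \<open>{m, u} \<in> T\<close> unfolding branch_def by blast
qed

end

section \<open>Windows on a cyclic index set\<close>

lemma cyclic_windows_meet:
  fixes n h a b :: nat
  assumes "0 < n" "n \<le> 2 * h + 1"
  shows "\<exists>t1\<le>h. \<exists>t2\<le>h. (a + t1) mod n = (b + t2) mod n"
proof -
  have meet: "\<exists>t1\<le>h. \<exists>t2\<le>h. (a + t1) mod n = (b + t2) mod n" if ab: "a mod n \<le> b mod n" for a b
  proof (cases "b mod n - a mod n \<le> h")
    case True
    have "(a + (b mod n - a mod n)) mod n = (a mod n + (b mod n - a mod n)) mod n"
      by (simp add: mod_add_left_eq)
    also have "\<dots> = (b + 0) mod n" using ab by simp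
    finally show ?thesis using True by blast
  next
    case False
    then have le: "n - (b mod n - a mod n) \<le> h" using assms by linarith
    have "(b + (n - (b mod n - a mod n))) mod n = (b mod n + (n - (b mod n - a mod n))) mod n"
      by (simp add: mod_add_left_eq)
    also have "b mod n + (n - (b mod n - a mod n)) = a mod n + n"
      using ab assms(1) mod_less_divisor[of n b] by linarith
    also have "(a mod n + n) mod n = (a + 0) mod n" by simp
    finally show ?thesis using le by (metis le0)
  qed
  show ?thesis
    using meet[of a b] meet[of b a] by (metis nat_le_linear)
qed

text \<open>From a member \<open>p\<close> of \<open>Q\<close>, take the farthest member \<open>p + d2\<close> at most \<open>h\<close> ahead and the
  farthest member \<open>p + d3\<close> at most \<open>h\<close> beyond it. The window just after \<open>p + d2\<close> contains a member,
  which by the choice of \<open>d2\<close> lies beyond \<open>p + h\<close>; so \<open>d3 > h\<close>, and \<open>n \<le> 2 h + 1\<close> closes the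
  last arc.\<close>

lemma three_members_short_arcs:
  fixes Q :: "nat \<Rightarrow> bool" and n h :: nat
  assumes "0 < n" "n \<le> 2 * h + 1" and hits: "\<And>a. \<exists>t<h. Q ((a + t) mod n)"
  shows "\<exists>p d2 d3. Q (p mod n) \<and> Q ((p + d2) mod n) \<and> Q ((p + d3) mod n) \<and>
    d2 \<le> d3 \<and> d3 < n \<and> d2 \<le> h \<and> d3 - d2 \<le> h \<and> n - d3 \<le> h"
proof -
  obtain p where p: "Q (p mod n)" using hits[of 0] by auto
  define S where "S = {d. d < n \<and> Q ((p + d) mod n)}"
  have "finite S" "0 \<in> S" using assms(1) p by (auto simp: S_def)
  define d2 where "d2 = Max {d \<in> S. d \<le> h}"
  have fin2: "finite {d \<in> S. d \<le> h}" "{d \<in> S. d \<le> h} \<noteq> {}"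
    using \<open>finite S\<close> \<open>0 \<in> S\<close> by auto
  have d2: "d2 \<in> S" "d2 \<le> h" and d2_max: "\<And>d. d \<in> S \<Longrightarrow> d \<le> h \<Longrightarrow> d \<le> d2"
    using Max_in[OF fin2] Max_ge[OF fin2(1)] unfolding d2_def by auto
  define d3 where "d3 = Max {d \<in> S. d \<le> d2 + h}"
  have fin3: "finite {d \<in> S. d \<le> d2 + h}" "{d \<in> S. d \<le> d2 + h} \<noteq> {}"
    using \<open>finite S\<close> d2 by auto
  have d3: "d3 \<in> S" "d3 \<le> d2 + h" and d3_max: "\<And>d. d \<in> S \<Longrightarrow> d \<le> d2 + h \<Longrightarrow> d \<le> d3"
    using Max_in[OF fin3] Max_ge[OF fin3(1)] unfolding d3_def by auto
  have "d2 \<le> d3" using d3_max d2 by simp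
  have "n \<le> d3 + h"
  proof (rule ccontr)
    assume short: "\<not> n \<le> d3 + h"
    obtain t where t: "t < h" "Q ((p + d2 + 1 + t) mod n)" using hits by blast
    then have "d2 + 1 + t \<in> S"
      using short \<open>d2 \<le> d3\<close> by (simp add: S_def add.assoc)
    moreover have "\<not> d2 + 1 + t \<le> h" using d2_max[OF \<open>d2 + 1 + t \<in> S\<close>] by linarith
    ultimately show False using d3_max[of "d2 + 1 + t"] t(1) short assms(2) by linarith
  qed
  then show ?thesis
    using p d2 d3 \<open>d2 \<le> d3\<close> unfolding S_def by (intro exI[of _ p] exI[of _ d2] exI[of _ d3]) auto
qed

text \<open>Here \<open>r x\<close> stands for the tree distance from the \<open>x\<close>-th cycle vertex to the
  hub, which lies on the tree paths replacing the cycle edges at \<open>p\<close>, \<open>p + d2\<close> and \<open>p + d3\<close>.\<close>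

lemma three_arcs_bound:
  fixes r :: "nat \<Rightarrow> nat" and n K p d2 d3 :: nat
  assumes periodic: "\<And>x. r (x + n) = r x"
    and spread: "\<And>x d. 2 * d \<le> n \<Longrightarrow> d \<le> r x + r (x + d)"
    and hub: "\<And>x. x \<in> {p, p + d2, p + d3} \<Longrightarrow> r x + r (Suc x) \<le> K"
    and arcs: "d2 \<le> d3" "d3 < n" "2 * d2 \<le> n" "2 * (d3 - d2) \<le> n" "2 * (n - d3) \<le> n"
  shows "n \<le> 3 * K"
proof -
  have "d2 + (d3 - d2) + (n - d3) \<le>
      (r p + r (p + d2)) + (r (p + d2) + r (p + d3)) + (r (p + d3) + r p)"
    using spread[OF arcs(3), of p] spread[OF arcs(4), of "p + d2"] spread[OF arcs(5), of "p + d3"]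
      periodic[of p] arcs(1,2) by (simp add: add.assoc)
  moreover have "d2 + (d3 - d2) + (n - d3) \<le> (r (Suc p) + r (Suc p + d2)) +
      (r (Suc p + d2) + r (Suc p + d3)) + (r (Suc p + d3) + r (Suc p))"
    using spread[OF arcs(3), of "Suc p"] spread[OF arcs(4), of "Suc p + d2"]
      spread[OF arcs(5), of "Suc p + d3"] periodic[of "Suc p"] arcs(1,2) by (simp add: add.assoc)
  ultimately show ?thesis
    using hub[of p] hub[of "p + d2"] hub[of "p + d3"] arcs(1,2) by simp
qed

section \<open>A hub for a closed chain of tree walks\<close>

locale tree_walk_chain = tree +
  fixes P :: "nat \<Rightarrow> 'a list" and n h :: nat
  assumes n_pos: "0 < n" and h_pos: "0 < h" and n_le: "n \<le> 2 * h + 1"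
    and walk_P: "\<And>i. i < n \<Longrightarrow> walk V T (P i)"
    and last_P: "\<And>i. i < n \<Longrightarrow> last (P i) = hd (P (Suc i mod n))"
begin

definition run_vertices :: "nat \<Rightarrow> 'a set" where
  "run_vertices a = (\<Union>t<h. set (P ((a + t) mod n)))"

lemma walk_P_mod: "walk V T (P (x mod n))"
  using walk_P n_pos by simp

lemma last_P_mod: "last (P (x mod n)) = hd (P (Suc x mod n))"
  using last_P[of "x mod n"] n_pos by (simp add: mod_Suc_eq)

lemma hd_P_in_run_vertices:
  assumes "t \<le> h"
  shows "hd (P ((a + t) mod n)) \<in> run_vertices a"
proof (cases "t < h")
  case True
  then show ?thesis
    using hd_in_set[OF walk_not_Nil[OF walk_P_mod]] unfolding run_vertices_def by blast
next
  case False
  then have "Suc (a + (h - 1)) = a + t" using assms h_pos by simp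
  then have "hd (P ((a + t) mod n)) = last (P ((a + (h - 1)) mod n))"
    using last_P_mod[of "a + (h - 1)"] by metis
  then show ?thesis
    using last_in_set[OF walk_not_Nil[OF walk_P_mod]] h_pos unfolding run_vertices_def
    by (metis (no_types, lifting) UN_iff diff_less lessThan_iff zero_less_one)
qed

text \<open>A run of walks avoiding \<open>m\<close> is connected in \<open>T - m\<close>, hence stays in one branch at \<open>m\<close>.\<close>

lemma run_vertices_in_branch:
  assumes m: "m \<in> V" "m \<notin> run_vertices a"
  shows "\<exists>z. {m, z} \<in> T \<and> run_vertices a \<subseteq> branch m z"
proof -
  have v: "hd (P (a mod n)) \<in> run_vertices a"
    using hd_P_in_run_vertices[of 0 a] by simp
  moreover have "hd (P (a mod n)) \<in> V"
    using walk_set[OF walk_P_mod] hd_in_set[OF walk_not_Nil[OF walk_P_mod]] by blast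
  ultimately obtain z where z: "{m, z} \<in> T" "hd (P (a mod n)) \<in> branch m z"
    using exists_branch_containing[OF m(1)] m(2) by metis
  have stays: "set (P ((a + t) mod n)) \<subseteq> branch m z"
    if "t < h" "hd (P ((a + t) mod n)) \<in> branch m z" for t
  proof -
    have "m \<notin> set (P ((a + t) mod n))" using m(2) \<open>t < h\<close> unfolding run_vertices_def by blast
    then show ?thesis using walk_in_branch[OF walk_Diff_edge[OF walk_P_mod]] that(2) by blast
  qed
  have "set (P ((a + t) mod n)) \<subseteq> branch m z" if "t < h" for t
    using that
  proof (induction t)
    case 0
    then show ?case using stays[of 0] z(2) by simp
  next
    case (Suc t)
    have "hd (P ((a + Suc t) mod n)) = last (P ((a + t) mod n))"
      using last_P_mod[of "a + t"] by simp
    also have "\<dots> \<in> branch m z"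
      using Suc last_in_set[OF walk_not_Nil[OF walk_P_mod]] by auto
    finally show ?case using stays Suc.prems by blast
  qed
  then show ?thesis using z(1) unfolding run_vertices_def by blast
qed

text \<open>If no vertex meets every run, every vertex has a branch containing a whole run.
  Take such a branch \<open>branch x y\<close> of least size and a run inside a branch \<open>branch y z\<close> at \<open>y\<close>.
  The two runs share a vertex, so \<open>z \<noteq> x\<close>, and then \<open>branch y z\<close> is a smaller such branch.\<close>

lemma hub_exists: "\<exists>m\<in>V. \<forall>a. m \<in> run_vertices a"
proof (rule ccontr)
  assume "\<not> ?thesis"
  then have escape: "\<exists>z a. {m, z} \<in> T \<and> run_vertices a \<subseteq> branch m z" if "m \<in> V" for m
    using run_vertices_in_branch that by blast
  define heavy where
    "heavy e \<longleftrightarrow> {fst e, snd e} \<in> T \<and> (\<exists>a. run_vertices a \<subseteq> branch (fst e) (snd e))" for e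
  obtain m where "m \<in> V" using connected by (auto simp: connected_graph_def)
  then obtain z where "heavy (m, z)" using escape unfolding heavy_def by fastforce
  then obtain e where e: "heavy e"
    and e_min: "\<And>e'. heavy e' \<Longrightarrow> card (branch (fst e) (snd e)) \<le> card (branch (fst e') (snd e'))"
    using ex_has_least_nat[of heavy _ "\<lambda>e. card (branch (fst e) (snd e))"] by blast
  obtain x y where "e = (x, y)" by fastforce
  with e obtain a where xy: "{x, y} \<in> T" and a: "run_vertices a \<subseteq> branch x y"
    unfolding heavy_def by auto
  obtain z b where yz: "{y, z} \<in> T" and b: "run_vertices b \<subseteq> branch y z"
    using escape edge_ends[OF xy] by blast
  obtain t1 t2 where "t1 \<le> h" "t2 \<le> h" "(a + t1) mod n = (b + t2) mod n"
    using cyclic_windows_meet[OF n_pos n_le] by blast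
  then have common: "hd (P ((a + t1) mod n)) \<in> branch x y \<inter> branch y z"
    using hd_P_in_run_vertices a b by fastforce
  show False
  proof (cases "z = x")
    case True
    then show False using branches_disjoint[OF xy] common by blast
  next
    case False
    then have "card (branch y z) < card (branch x y)"
      using psubset_card_mono[OF finite_subset[OF branch_subset finite_V]] branch_psubset[OF xy yz]
      by blast
    moreover have "heavy (y, z)" using yz b unfolding heavy_def by auto
    ultimately show False using e_min \<open>e = (x, y)\<close> by fastforce
  qed
qed

end

section \<open>The stretch bound\<close>

definition tree_stretch :: "'a set \<Rightarrow> 'a set set \<Rightarrow> 'a set set \<Rightarrow> nat" where
  "tree_stretch V E T = Max {gdist V T u v | u v. {u, v} \<in> E}"

lemma gdist_le_tree_stretch:
  assumes "simple_graph V E" "{u, v} \<in> E"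
  shows "gdist V T u v \<le> tree_stretch V E T"
proof -
  have "{gdist V T u v | u v. {u, v} \<in> E} \<subseteq> (\<lambda>(u, v). gdist V T u v) ` (V \<times> V)"
  proof
    fix g
    assume "g \<in> {gdist V T u v | u v. {u, v} \<in> E}"
    then obtain u v where "g = gdist V T u v" "{u, v} \<in> E" by blast
    moreover from this have "(u, v) \<in> V \<times> V" using assms(1) by (auto simp: simple_graph_def)
    ultimately show "g \<in> (\<lambda>(u, v). gdist V T u v) ` (V \<times> V)" by force
  qed
  moreover have "finite (V \<times> V)" using assms(1) by (simp add: simple_graph_def)
  ultimately show ?thesis
    unfolding tree_stretch_def using assms(2) by (intro Max_ge) (auto intro: finite_subset)
qed

lemma spanning_tree_tree: "simple_graph V E \<Longrightarrow> spanning_tree V E T \<Longrightarrow> tree V T"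
  unfolding spanning_tree_def by unfold_locales (auto intro: simple_graph_subset)

lemma tree_paths_along_cycle:
  assumes "simple_graph V E" "is_cycle V E c" "spanning_tree V E T"
  shows "\<exists>P. \<forall>i<length c. walk V T (P i) \<and> hd (P i) = c ! i \<and>
    last (P i) = c ! (Suc i mod length c) \<and> length (P i) \<le> tree_stretch V E T + 1"
proof -
  interpret tree V T using spanning_tree_tree assms(1,3) .
  have "\<exists>w. walk V T w \<and> hd w = c ! i \<and> last w = c ! (Suc i mod length c) \<and>
      length w \<le> tree_stretch V E T + 1" if i: "i < length c" for i
  proof -
    have cV: "set c \<subseteq> V" and edge: "{c ! i, c ! (Suc i mod length c)} \<in> E"
      using assms(2) i by (auto simp: is_cycle_def)
    have "Suc i mod length c < length c" by (rule mod_less_divisor) (use i in linarith)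
    then have "c ! i \<in> V" "c ! (Suc i mod length c) \<in> V"
      using cV i by (meson nth_mem subsetD)+
    then obtain w where "walk V T w" "hd w = c ! i" "last w = c ! (Suc i mod length c)"
        "length w = gdist V T (c ! i) (c ! (Suc i mod length c)) + 1"
      using shortest_walk_exists[OF connected_graph_reachable[OF connected]] by blast
    then show ?thesis using gdist_le_tree_stretch[OF assms(1) edge, of T] by auto
  qed
  then have "\<forall>i\<in>{..<length c}. \<exists>w. walk V T w \<and> hd w = c ! i \<and>
      last w = c ! (Suc i mod length c) \<and> length w \<le> tree_stretch V E T + 1"
    by simp
  from bchoice[OF this] show ?thesis by auto
qed

lemma isometric_cycle_spread:
  assumes iso: "isometric_cycle V E c" and "simple_graph V E" "spanning_tree V E T"
    and "m \<in> V" "2 * d \<le> length c"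
  defines "n \<equiv> length c"
  shows "d \<le> gdist V T (c ! (x mod n)) m + gdist V T (c ! ((x + d) mod n)) m"
proof -
  interpret tree V T using spanning_tree_tree assms(2,3) .
  have "set c \<subseteq> V" "0 < n"
    using iso unfolding isometric_cycle_def is_cycle_def n_def by auto
  then have cV: "c ! (y mod n) \<in> V" for y
    unfolding n_def by (meson mod_less_divisor nth_mem subsetD)
  note reach = connected_graph_reachable[OF connected cV \<open>m \<in> V\<close>]
    connected_graph_reachable[OF connected \<open>m \<in> V\<close> cV]
    connected_graph_reachable[OF connected cV cV]
  have "T \<subseteq> E" using assms(3) by (simp add: spanning_tree_def)
  have "d \<le> gdist V E (c ! (x mod n)) (c ! ((x + d) mod n))"
    using isometric_cycle_gdist_ge[OF iso assms(5)] unfolding n_def .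
  also have "\<dots> \<le> gdist V T (c ! (x mod n)) (c ! ((x + d) mod n))"
    using gdist_antimono[OF \<open>T \<subseteq> E\<close> reach(3)] .
  also have "\<dots> \<le> gdist V T (c ! (x mod n)) m + gdist V T m (c ! ((x + d) mod n))"
    using gdist_triangle[OF reach(1,2)] .
  also have "gdist V T m (c ! ((x + d) mod n)) = gdist V T (c ! ((x + d) mod n)) m"
    using gdist_commute[OF reach(2)] .
  finally show ?thesis .
qed

lemma cycle_length_le_tree_stretch:
  assumes "simple_graph V E" and iso: "isometric_cycle V E c"
    and st: "spanning_tree V E T"
  shows "length c \<le> 3 * tree_stretch V E T"
proof -
  let ?n = "length c"
  have cyc: "is_cycle V E c" and n3: "?n \<ge> 3" and "set c \<subseteq> V"
    using iso by (auto simp: isometric_cycle_def is_cycle_def)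
  then have cV: "c ! (y mod ?n) \<in> V" for y
    by (meson mod_less_divisor nth_mem subsetD zero_less_numeral less_le_trans)
  obtain P where P: "\<And>i. i < ?n \<Longrightarrow> walk V T (P i) \<and> hd (P i) = c ! i \<and>
      last (P i) = c ! (Suc i mod ?n) \<and> length (P i) \<le> tree_stretch V E T + 1"
    using tree_paths_along_cycle[OF assms(1) cyc st] by blast
  have "last (P i) = hd (P (Suc i mod ?n))" if "i < ?n" for i
  proof -
    have "Suc i mod ?n < ?n" by (rule mod_less_divisor) (use n3 in linarith)
    then show ?thesis using P[OF that] P[of "Suc i mod ?n"] by simp
  qed
  then interpret tree_walk_chain V T P ?n "?n div 2"
    using P n3 spanning_tree_tree[OF assms(1) st] by unfold_locales (auto simp: tree_def)
  obtain m where m: "m \<in> V" "\<And>a. m \<in> run_vertices a" using hub_exists by blast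
  then have "\<exists>t<?n div 2. m \<in> set (P ((a + t) mod ?n))" for a
    unfolding run_vertices_def by blast
  then obtain p d2 d3 where hits: "\<And>x. x \<in> {p, p + d2, p + d3} \<Longrightarrow> m \<in> set (P (x mod ?n))"
    and arcs: "d2 \<le> d3" "d3 < ?n" "d2 \<le> ?n div 2" "d3 - d2 \<le> ?n div 2" "?n - d3 \<le> ?n div 2"
    using three_members_short_arcs[OF n_pos n_le, of "\<lambda>i. m \<in> set (P i)"] by blast
  define r where "r x = gdist V T (c ! (x mod ?n)) m" for x
  have hub: "r x + r (Suc x) \<le> tree_stretch V E T" if "m \<in> set (P (x mod ?n))" for x
  proof -
    have "x mod ?n < ?n" by (rule mod_less_divisor) (use n3 in linarith)
    then have "gdist V T (c ! (x mod ?n)) m + gdist V T m (c ! (Suc x mod ?n)) + 1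
        \<le> tree_stretch V E T + 1"
      using gdist_via_mem[OF _ that] P[of "x mod ?n"] by (fastforce simp: mod_Suc_eq)
    moreover have "gdist V T m (c ! (Suc x mod ?n)) = r (Suc x)"
      using gdist_commute[OF connected_graph_reachable[OF connected m(1) cV]] by (simp add: r_def)
    ultimately show ?thesis unfolding r_def by simp
  qed
  show ?thesis
  proof (rule three_arcs_bound[where r = r and p = p and ?d2.0 = d2 and ?d3.0 = d3])
    show "d \<le> r x + r (x + d)" if "2 * d \<le> ?n" for x d
      using isometric_cycle_spread[OF iso assms(1) st m(1) that] unfolding r_def by simp
  qed (use arcs hits hub in \<open>auto simp: r_def\<close>)
qed

theorem mainTheorem2:
  fixes V :: "'a set" and E :: "'a set set" and c :: "'a list"
  assumes "simple_graph V E"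
    and "connected_graph V E"
    and "isometric_cycle V E c"
  shows "int (stretch V E) \<ge> \<lceil>real (length c) / 3\<rceil>"
proof -
  have "finite {T. spanning_tree V E T}"
    using simple_graph_finite_edges[OF assms(1)] by (auto simp: spanning_tree_def)
  moreover have "{T. spanning_tree V E T} \<noteq> {}"
    using spanning_tree_exists[OF assms(1,2)] by blast
  ultimately obtain T where "spanning_tree V E T" "stretch V E = tree_stretch V E T"
    using Min_in[of "tree_stretch V E ` {T. spanning_tree V E T}"]
    unfolding stretch_def tree_stretch_def by fastforce
  then have "length c \<le> 3 * stretch V E"
    using cycle_length_le_tree_stretch[OF assms(1,3)] by simp
  then show ?thesis by (simp add: ceiling_le_iff)
qed

end
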